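(* Let $f:\{-1,1\}^k\to\{0,1\}$ and $\delta\in(0,1)$. There exists a vanishing probability measure on $\mathcal{C}_\delta(f)$ if and only if there exists a vanishing probability measure on $\mathcal{C}(f)$.
   Context: $\mathcal{C}(f)$ is the set of symmetric $(k+1)\times(k+1)$ moment matrices $\zeta(\nu)$ (indices $0..k$: $\zeta(i,i)=1$, $\zeta(0,i)=\mathbb{E}_\nu x_i$, $\zeta(i,j)=\mathbb{E}_\nu x_ix_j$ for $i\neq j$) over distributions $\nu$ on $f^{-1}(1)$; $\mathcal{C}_\delta(f)=\{(1-\delta)\zeta+\delta I_{k+1}:\zeta\in\mathcal{C}(f)\}$. For $S\subseteq[k]$, a permutation $\pi$ of $S$, and $b\in\{-1,1\}^{|S|}$, $\zeta_{S,\pi,b}$ is the submatrix of $\zeta$ on rows/columns $\{0\}\cup S$ with the $S$-coordinates permuted by $\pi$, multiplied entrywise by $(1\ b)(1\ b)^T$; for a measure $\Lambda$, $\Lambda_{S,\pi,b}$ is the law of $\zeta_{S,\pi,b}$, $\zeta\sim\Lambda$. With $\hat f(S)$ the Fourier coefficients of $f$, a probability measure $\Lambda$ (on either body) is vanishing if for every $t\in[k]$ the signed measure $\mathbb{E}_{|S|=t}\mathbb{E}_{\pi}\mathbb{E}_{b}[(\prod_{i\in S}b_i)\hat f(S)\Lambda_{S,\pi,b}]$ ($S,\pi,b$ uniform) is identically zero. *)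

theory Defs
  imports "HOL-Probability.Probability"
begin

definition cube :: "nat \<Rightarrow> (nat \<Rightarrow> real) set" where
  "cube k = {x. (\<forall>i\<in>{1..k}. x i \<in> {-1, 1}) \<and> (\<forall>i. i \<notin> {1..k} \<longrightarrow> x i = 0)}"

definition fhat :: "nat \<Rightarrow> ((nat \<Rightarrow> real) \<Rightarrow> real) \<Rightarrow> nat set \<Rightarrow> real" where
  "fhat k f S = (\<Sum>x\<in>cube k. f x * (\<Prod>i\<in>S. x i)) / 2 ^ k"

text \<open>Matrices of size n (indices 0..n-1) are extensional functions on index pairs.\<close>
definition mat_space :: "nat \<Rightarrow> (nat \<times> nat \<Rightarrow> real) measure" where
  "mat_space n = PiM ({..<n} \<times> {..<n}) (\<lambda>_. borel)"

definition moment_matrix :: "nat \<Rightarrow> (nat \<Rightarrow> real) pmf \<Rightarrow> (nat \<times> nat \<Rightarrow> real)" where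
  "moment_matrix k \<nu> = restrict (\<lambda>(i, j).
      if i = j then 1
      else if i = 0 then measure_pmf.expectation \<nu> (\<lambda>x. x j)
      else if j = 0 then measure_pmf.expectation \<nu> (\<lambda>x. x i)
      else measure_pmf.expectation \<nu> (\<lambda>x. x i * x j)) ({..<Suc k} \<times> {..<Suc k})"

definition Cbody :: "nat \<Rightarrow> ((nat \<Rightarrow> real) \<Rightarrow> real) \<Rightarrow> (nat \<times> nat \<Rightarrow> real) set" where
  "Cbody k f = {moment_matrix k \<nu> | \<nu>. set_pmf \<nu> \<subseteq> {x \<in> cube k. f x = 1}}"

definition Cdelta :: "nat \<Rightarrow> ((nat \<Rightarrow> real) \<Rightarrow> real) \<Rightarrow> real \<Rightarrow> (nat \<times> nat \<Rightarrow> real) set" where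
  "Cdelta k f \<delta> = {restrict (\<lambda>(i, j). (1 - \<delta>) * \<zeta> (i, j) + \<delta> * (if i = j then 1 else 0))
                       ({..<Suc k} \<times> {..<Suc k}) | \<zeta>. \<zeta> \<in> Cbody k f}"

text \<open>Orderings of S: bijections from positions 1..|S| onto S (the permutation pi of S).\<close>
definition perms_of :: "nat set \<Rightarrow> (nat \<Rightarrow> nat) set" where
  "perms_of S = {\<pi>. bij_betw \<pi> {1..card S} S \<and> (\<forall>i. i \<notin> {1..card S} \<longrightarrow> \<pi> i = 0)}"

definition signs :: "nat \<Rightarrow> (nat \<Rightarrow> real) set" where
  "signs t = {b. (\<forall>i\<in>{1..t}. b i \<in> {-1, 1}) \<and> (\<forall>i. i \<notin> {1..t} \<longrightarrow> b i = 0)}"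

definition submat :: "(nat \<times> nat \<Rightarrow> real) \<Rightarrow> nat set \<Rightarrow> (nat \<Rightarrow> nat) \<Rightarrow> (nat \<Rightarrow> real)
    \<Rightarrow> (nat \<times> nat \<Rightarrow> real)" where
  "submat \<zeta> S \<pi> b = restrict (\<lambda>(i, j).
      \<zeta> (if i = 0 then 0 else \<pi> i, if j = 0 then 0 else \<pi> j)
        * (if i = 0 then 1 else b i) * (if j = 0 then 1 else b j))
      ({..<Suc (card S)} \<times> {..<Suc (card S)})"

definition prob_on :: "nat \<Rightarrow> (nat \<times> nat \<Rightarrow> real) measure \<Rightarrow> (nat \<times> nat \<Rightarrow> real) set \<Rightarrow> bool" where
  "prob_on k \<Lambda> B \<longleftrightarrow> prob_space \<Lambda> \<and> sets \<Lambda> = sets (restrict_space (mat_space (Suc k)) B)"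

text \<open>Vanishing: for every t in [k], the signed measure
  E_{|S|=t} E_pi E_b [(prod b_i) fhat(S) Lambda_{S,pi,b}] is zero on every measurable set.\<close>
definition vanishing :: "nat \<Rightarrow> ((nat \<Rightarrow> real) \<Rightarrow> real) \<Rightarrow> (nat \<times> nat \<Rightarrow> real) measure \<Rightarrow> bool" where
  "vanishing k f \<Lambda> \<longleftrightarrow>
     (\<forall>t\<in>{1..k}. \<forall>A\<in>sets (mat_space (Suc t)).
        (\<Sum>S\<in>{S. S \<subseteq> {1..k} \<and> card S = t}. \<Sum>\<pi>\<in>perms_of S. \<Sum>b\<in>signs t.
            (\<Prod>i\<in>{1..t}. b i) * fhat k f S
              * measure \<Lambda> {\<zeta> \<in> space \<Lambda>. submat \<zeta> S \<pi> b \<in> A})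
          / (real (k choose t) * fact t * 2 ^ t) = 0)"

end

theory Submission
  imports Defs
begin

text \<open>The matrices \<open>\<zeta>\<close> and \<open>(1 - \<delta>) \<zeta> + \<delta> I\<close> determine each other through an invertible affine
  map \<open>M \<mapsto> a M + c I\<close>. Such a map commutes with taking the signed, permuted principal submatrices
  \<open>\<zeta>\<^sub>S\<^sub>,\<^sub>\<pi>\<^sub>,\<^sub>b\<close>, since the signs square to one on the diagonal. Hence pushing a measure forward along it
  pushes every measure \<open>\<Lambda>\<^sub>S\<^sub>,\<^sub>\<pi>\<^sub>,\<^sub>b\<close> forward along the same map on the smaller matrices, and
  vanishing is preserved in both directions.\<close>

definition affine_mat :: "nat \<Rightarrow> real \<Rightarrow> real \<Rightarrow> (nat \<times> nat \<Rightarrow> real) \<Rightarrow> (nat \<times> nat \<Rightarrow> real)" where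
  "affine_mat n a c M = restrict (\<lambda>(i, j). a * M (i, j) + c * (if i = j then 1 else 0)) ({..<n} \<times> {..<n})"

lemma measurable_affine_mat: "affine_mat n a c \<in> measurable (mat_space n) (mat_space n)"
  unfolding affine_mat_def mat_space_def
  by (rule measurable_restrict) (clarsimp split: prod.splits, measurable)

lemma affine_mat_affine_mat:
  assumes "M \<in> extensional ({..<n} \<times> {..<n})"
  shows "affine_mat n a c (affine_mat n a' c' M) = affine_mat n (a * a') (a * c' + c) M"
  using assms unfolding affine_mat_def extensional_def
  by (intro ext) (auto simp: algebra_simps split: prod.splits)

lemma affine_mat_1_0:
  assumes "M \<in> extensional ({..<n} \<times> {..<n})"
  shows "affine_mat n 1 0 M = M"
proof
  fix p show "affine_mat n 1 0 M p = M p"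
    using assms unfolding affine_mat_def extensional_def by (cases p) auto
qed

lemma Cdelta_eq_image_affine_mat: "Cdelta k f \<delta> = affine_mat (Suc k) (1 - \<delta>) \<delta> ` Cbody k f"
  unfolding Cdelta_def affine_mat_def by auto

lemma Cbody_extensional: "\<zeta> \<in> Cbody k f \<Longrightarrow> \<zeta> \<in> extensional ({..<Suc k} \<times> {..<Suc k})"
  unfolding Cbody_def moment_matrix_def by auto

lemma perm_index_in:
  assumes "\<pi> \<in> perms_of S" "0 < i" "i < Suc (card S)"
  shows "\<pi> i \<in> S"
  using assms unfolding perms_of_def bij_betw_def by auto

lemma perm_index_less:
  assumes "S \<subseteq> {1..k}" "\<pi> \<in> perms_of S" "i < Suc (card S)"
  shows "(if i = 0 then 0 else \<pi> i) < Suc k"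
  using perm_index_in[OF assms(2) _ assms(3)] assms(1) by auto

lemma perm_index_eq_iff:
  assumes "S \<subseteq> {1..k}" "\<pi> \<in> perms_of S" "i < Suc (card S)" "j < Suc (card S)"
  shows "((if i = 0 then 0 else \<pi> i) = (if j = 0 then 0 else \<pi> j)) \<longleftrightarrow> i = j"
proof -
  have inj: "inj_on \<pi> {1..card S}"
    using assms(2) unfolding perms_of_def bij_betw_def by auto
  have nonzero: "\<pi> l \<noteq> 0" if "0 < l" "l < Suc (card S)" for l
    using perm_index_in[OF assms(2) that] assms(1) by auto
  show ?thesis
  proof (cases "i = 0 \<or> j = 0")
    case True
    then show ?thesis using nonzero assms(3,4) by auto
  next
    case False
    then show ?thesis using inj_on_eq_iff[OF inj, of i j] assms(3,4) by simp
  qed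
qed

lemma sign_square:
  assumes "b \<in> signs t" "i < Suc t"
  shows "(if i = 0 then 1 else b i) * (if i = 0 then 1 else b i) = (1::real)"
proof (cases "i = 0")
  case False
  then have "b i \<in> {-1, 1}"
    using assms unfolding signs_def by auto
  then show ?thesis using False by auto
qed simp

lemma measurable_submat:
  assumes "S \<subseteq> {1..k}" "\<pi> \<in> perms_of S"
  shows "(\<lambda>\<zeta>. submat \<zeta> S \<pi> b) \<in> measurable (mat_space (Suc k)) (mat_space (Suc (card S)))"
  unfolding submat_def mat_space_def
proof (rule measurable_restrict, clarify)
  fix i j assume "i < Suc (card S)" "j < Suc (card S)"
  then have "(if i = 0 then 0 else \<pi> i, if j = 0 then 0 else \<pi> j) \<in> {..<Suc k} \<times> {..<Suc k}"
    using perm_index_less[OF assms] by auto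
  then show "(\<lambda>x. x (if i = 0 then 0 else \<pi> i, if j = 0 then 0 else \<pi> j) *
                 (if i = 0 then 1 else b i) * (if j = 0 then 1 else b j))
         \<in> borel_measurable (Pi\<^sub>M ({..<Suc k} \<times> {..<Suc k}) (\<lambda>_. borel))"
    by measurable
qed

lemma submat_affine_mat:
  assumes "S \<subseteq> {1..k}" "\<pi> \<in> perms_of S" "b \<in> signs (card S)"
  shows "submat (affine_mat (Suc k) a c \<zeta>) S \<pi> b = affine_mat (Suc (card S)) a c (submat \<zeta> S \<pi> b)"
proof (intro ext, clarify)
  fix i j
  show "submat (affine_mat (Suc k) a c \<zeta>) S \<pi> b (i, j) = affine_mat (Suc (card S)) a c (submat \<zeta> S \<pi> b) (i, j)"
  proof (cases "i < Suc (card S) \<and> j < Suc (card S)")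
    case True
    then have "(if i = 0 then 0 else \<pi> i) < Suc k" "(if j = 0 then 0 else \<pi> j) < Suc k"
      and "((if i = 0 then 0 else \<pi> i) = (if j = 0 then 0 else \<pi> j)) \<longleftrightarrow> i = j"
      and "(if i = 0 then 1 else b i) * (if i = 0 then 1 else b i) = 1"
      using perm_index_less[OF assms(1,2)] perm_index_eq_iff[OF assms(1,2)] sign_square[OF assms(3)]
      by auto
    with True show ?thesis
      unfolding submat_def affine_mat_def by (auto simp: algebra_simps)
  qed (auto simp: submat_def affine_mat_def)
qed

lemma measure_distr_submat:
  assumes g: "g \<in> measurable \<Lambda> (restrict_space (mat_space (Suc k)) B)"
    and S: "S \<subseteq> {1..k}" and \<pi>: "\<pi> \<in> perms_of S"
    and commute: "\<And>\<zeta>. submat (g \<zeta>) S \<pi> b = h (submat \<zeta> S \<pi> b)"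
    and A: "A \<in> sets (mat_space (Suc (card S)))"
  shows "measure (distr \<Lambda> (restrict_space (mat_space (Suc k)) B) g)
           {\<zeta> \<in> space (restrict_space (mat_space (Suc k)) B). submat \<zeta> S \<pi> b \<in> A}
       = measure \<Lambda> {\<zeta> \<in> space \<Lambda>. submat \<zeta> S \<pi> b \<in> h -` A}"
proof -
  let ?N = "restrict_space (mat_space (Suc k)) B"
  have "(\<lambda>\<zeta>. submat \<zeta> S \<pi> b) \<in> measurable ?N (mat_space (Suc (card S)))"
    using measurable_restrict_space1[OF measurable_submat[OF S \<pi>]] .
  from measurable_sets[OF this A]
  have "{\<zeta> \<in> space ?N. submat \<zeta> S \<pi> b \<in> A} \<in> sets ?N"
    by (simp add: vimage_def Int_def conj_commute)
  moreover have "g -` {\<zeta> \<in> space ?N. submat \<zeta> S \<pi> b \<in> A} \<inter> space \<Lambda>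
      = {\<zeta> \<in> space \<Lambda>. submat \<zeta> S \<pi> b \<in> h -` A}"
    using measurable_space[OF g] commute by auto
  ultimately show ?thesis
    by (simp add: measure_distr[OF g])
qed

lemma vanishing_distr_affine_mat:
  assumes pr: "prob_on k \<Lambda> B"
    and maps: "\<And>\<zeta>. \<zeta> \<in> B \<Longrightarrow> affine_mat (Suc k) a c \<zeta> \<in> B'"
    and van: "vanishing k f \<Lambda>"
  shows "\<exists>\<Lambda>'. prob_on k \<Lambda>' B' \<and> vanishing k f \<Lambda>'"
proof -
  let ?N = "restrict_space (mat_space (Suc k)) B'"
  let ?g = "affine_mat (Suc k) a c"
  have sets_\<Lambda>: "sets \<Lambda> = sets (restrict_space (mat_space (Suc k)) B)"
    using pr unfolding prob_on_def by auto
  have g: "?g \<in> measurable \<Lambda> ?N"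
  proof (rule measurable_restrict_space2)
    show "?g \<in> space \<Lambda> \<rightarrow> B'"
      using maps sets_eq_imp_space_eq[OF sets_\<Lambda>] by (auto simp: space_restrict_space)
    show "?g \<in> measurable \<Lambda> (mat_space (Suc k))"
      unfolding measurable_cong_sets[OF sets_\<Lambda> refl]
      by (rule measurable_restrict_space1[OF measurable_affine_mat])
  qed
  define \<Lambda>' where "\<Lambda>' = distr \<Lambda> ?N ?g"
  have "prob_on k \<Lambda>' B'"
    using pr prob_space.prob_space_distr[OF _ g] unfolding prob_on_def \<Lambda>'_def by simp
  moreover have "vanishing k f \<Lambda>'"
    unfolding vanishing_def
  proof (intro ballI)
    fix t A assume t: "t \<in> {1..k}" and A: "A \<in> sets (mat_space (Suc t))"
    let ?A' = "affine_mat (Suc t) a c -` A \<inter> space (mat_space (Suc t))"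
    have A': "?A' \<in> sets (mat_space (Suc t))"
      using measurable_sets[OF measurable_affine_mat A] .
    have submat_in_space: "submat \<zeta> S \<pi> b \<in> space (mat_space (Suc (card S)))" for \<zeta> S \<pi> b
      unfolding submat_def mat_space_def space_PiM by auto
    let ?sum = "\<lambda>\<Lambda> A. \<Sum>S\<in>{S. S \<subseteq> {1..k} \<and> card S = t}. \<Sum>\<pi>\<in>perms_of S. \<Sum>b\<in>signs t.
        (\<Prod>i\<in>{1..t}. b i) * fhat k f S * measure \<Lambda> {\<zeta> \<in> space \<Lambda>. submat \<zeta> S \<pi> b \<in> A}"
    have "measure \<Lambda>' {\<zeta> \<in> space \<Lambda>'. submat \<zeta> S \<pi> b \<in> A}
        = measure \<Lambda> {\<zeta> \<in> space \<Lambda>. submat \<zeta> S \<pi> b \<in> ?A'}"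
      if "S \<in> {S. S \<subseteq> {1..k} \<and> card S = t}" "\<pi> \<in> perms_of S" "b \<in> signs t" for S \<pi> b
      using measure_distr_submat[OF g, of S \<pi> b "affine_mat (Suc t) a c" A]
        submat_affine_mat[of S k \<pi> b a c] submat_in_space that A
      unfolding \<Lambda>'_def by (auto intro: arg_cong[where f = "measure \<Lambda>"])
    then have "?sum \<Lambda>' A = ?sum \<Lambda> ?A'"
      by (intro sum.cong refl) simp
    moreover have "?sum \<Lambda> ?A' / (real (k choose t) * fact t * 2 ^ t) = 0"
      using van t A' unfolding vanishing_def by blast
    ultimately show "?sum \<Lambda>' A / (real (k choose t) * fact t * 2 ^ t) = 0"
      by simp
  qed
  ultimately show ?thesis by blast
qed

theorem mainTheorem6:
  fixes k :: nat and f :: "(nat \<Rightarrow> real) \<Rightarrow> real" and \<delta> :: real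
  assumes "\<forall>x\<in>cube k. f x \<in> {0, 1}"
    and "0 < \<delta>" and "\<delta> < 1"
  shows "(\<exists>\<Lambda>. prob_on k \<Lambda> (Cdelta k f \<delta>) \<and> vanishing k f \<Lambda>)
     \<longleftrightarrow> (\<exists>\<Lambda>. prob_on k \<Lambda> (Cbody k f) \<and> vanishing k f \<Lambda>)"
proof
  let ?scale = "affine_mat (Suc k) (1 - \<delta>) \<delta>"
  let ?unscale = "affine_mat (Suc k) (1 / (1 - \<delta>)) (- (\<delta> / (1 - \<delta>)))"
  have unscale_scale: "?unscale (?scale \<zeta>) = \<zeta>" if "\<zeta> \<in> Cbody k f" for \<zeta>
  proof -
    have "?unscale (?scale \<zeta>) = affine_mat (Suc k) (1 / (1 - \<delta>) * (1 - \<delta>)) (1 / (1 - \<delta>) * \<delta> + - (\<delta> / (1 - \<delta>))) \<zeta>"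
      by (rule affine_mat_affine_mat[OF Cbody_extensional[OF that]])
    also have "\<dots> = affine_mat (Suc k) 1 0 \<zeta>"
      using assms(3) by simp
    also have "\<dots> = \<zeta>"
      by (rule affine_mat_1_0[OF Cbody_extensional[OF that]])
    finally show ?thesis .
  qed
  show "\<exists>\<Lambda>. prob_on k \<Lambda> (Cbody k f) \<and> vanishing k f \<Lambda>"
    if "\<exists>\<Lambda>. prob_on k \<Lambda> (Cdelta k f \<delta>) \<and> vanishing k f \<Lambda>"
  proof -
    from that obtain \<Lambda> where \<Lambda>: "prob_on k \<Lambda> (?scale ` Cbody k f)" "vanishing k f \<Lambda>"
      unfolding Cdelta_eq_image_affine_mat by blast
    show ?thesis
      by (rule vanishing_distr_affine_mat[where a = "1 / (1 - \<delta>)" and c = "- (\<delta> / (1 - \<delta>))", OF \<Lambda>(1) _ \<Lambda>(2)])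
        (auto simp: unscale_scale)
  qed
  show "\<exists>\<Lambda>. prob_on k \<Lambda> (Cdelta k f \<delta>) \<and> vanishing k f \<Lambda>"
    if "\<exists>\<Lambda>. prob_on k \<Lambda> (Cbody k f) \<and> vanishing k f \<Lambda>"
  proof -
    from that obtain \<Lambda> where \<Lambda>: "prob_on k \<Lambda> (Cbody k f)" "vanishing k f \<Lambda>"
      by blast
    show ?thesis
      unfolding Cdelta_eq_image_affine_mat
      by (rule vanishing_distr_affine_mat[where a = "1 - \<delta>" and c = \<delta>, OF \<Lambda>(1) _ \<Lambda>(2)])
        (rule imageI)
  qed
qed

end
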